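(* Let $m,n\ge 1$ and let $x_1,\dots,x_m\in\{0,1\}^n$ be arbitrary input vectors. Run the Triangular Basis Algorithm (described in the context) on these inputs, and for each $i\in\{1,\dots,n\}$ define \[\beta_i = 0^{i-1}\,\Vert\,\overline{av_i}\,\Vert\, b_i[(i+1)..n]\in\{0,1\}^n,\] where $av_i$ and $b_i[(i+1)..n]$ are the values at the end of the algorithm and $\overline{av_i}=1\oplus av_i$. Then the $\mathbb{F}_2$-linear span of the original input vectors $x_1,\dots,x_m$ equals the $\mathbb{F}_2$-linear span of $\beta_1,\dots,\beta_n$.
   Context: All arithmetic is over $\mathbb{F}_2$ ($+$ is XOR, $\wedge$ is AND). For a vector $v\in\{0,1\}^n$, $v[i]$ is its $i$-th bit and $v[a..b]$ the substring of bits $a$ through $b$ (empty if $a>b$); $\Vert$ is concatenation. Triangular Basis Algorithm. Input: $x_1,\dots,x_m\in\{0,1\}^n$ (modified in place). Auxiliary variables: bits $\mathrm{used}_j$ ($1\le j\le m$) initialized to $0$; bits $av_i$ ($1\le i\le n$) initialized to $1$; strings $b_i[(i+1)..n]$ ($1\le i\le n$) initialized to all zeros. The algorithm executes, for $i=1,\dots,n$ (outer loop) and, inside it, for $j=1,\dots,m$ (inner loop), the following four steps in order (iteration $(i,j)$): (1) $\mathrm{used}_j \leftarrow \mathrm{used}_j + (x_j[i]\wedge av_i)$; (2) $av_i\leftarrow av_i + (x_j[i]\wedge \mathrm{used}_j)$ (using the value of $\mathrm{used}_j$ just updated); (3) if $\mathrm{used}_j=1$: $b_i[(i+1)..n]\leftarrow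 b_i[(i+1)..n]+x_j[(i+1)..n]$; (4) if $x_j[i]=1$: $x_j[(i+1)..n]\leftarrow x_j[(i+1)..n]+b_i[(i+1)..n]$. *)

theory Defs
  imports Complex_Main "HOL-Library.Z2" "HOL-Library.Function_Algebras"
begin

text \<open>Vectors in {0,1}^n are modelled as functions nat => bit whose support lies in {1..n};
 addition of bit is XOR and multiplication is AND.\<close>

type_synonym vec = "nat \<Rightarrow> bit"

record tb_state =
  xs   :: "nat \<Rightarrow> vec"
  used :: "nat \<Rightarrow> bit"
  av   :: "nat \<Rightarrow> bit"
  bs   :: "nat \<Rightarrow> vec"          \<comment> \<open>b_i, only coordinates (i+1)..n are meaningful\<close>

definition tb_step :: "nat \<Rightarrow> nat \<Rightarrow> nat \<Rightarrow> tb_state \<Rightarrow> tb_state" where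
  "tb_step n i j s = (let
      x = xs s j;
      u' = used s j + x i * av s i;                                   \<comment> \<open>(1)\<close>
      a' = av s i + x i * u';                                         \<comment> \<open>(2)\<close>
      b' = (if u' = 1 then (\<lambda>k. if i < k \<and> k \<le> n then bs s i k + x k else bs s i k)
            else bs s i);                                              \<comment> \<open>(3)\<close>
      x' = (if x i = 1 then (\<lambda>k. if i < k \<and> k \<le> n then x k + b' k else x k)
            else x)                                                    \<comment> \<open>(4)\<close>
    in \<lparr> xs = (xs s)(j := x'), used = (used s)(j := u'),
         av = (av s)(i := a'), bs = (bs s)(i := b') \<rparr>)"

definition tb_init :: "(nat \<Rightarrow> vec) \<Rightarrow> tb_state" where
  "tb_init x = \<lparr> xs = x, used = (\<lambda>_. 0), av = (\<lambda>_. 1), bs = (\<lambda>_ _. 0) \<rparr>"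

definition tb_run :: "nat \<Rightarrow> nat \<Rightarrow> (nat \<Rightarrow> vec) \<Rightarrow> tb_state" where
  "tb_run n m x = fold (\<lambda>i s. fold (\<lambda>j. tb_step n i j) [1..<m+1] s) [1..<n+1] (tb_init x)"

definition tb_beta :: "nat \<Rightarrow> tb_state \<Rightarrow> nat \<Rightarrow> vec" where
  "tb_beta n s i = (\<lambda>k. if k = i then 1 + av s i
                        else if i < k \<and> k \<le> n then bs s i k else 0)"

definition f2_span :: "vec set \<Rightarrow> vec set" where
  "f2_span S = Modules.module.span (\<lambda>(c::bit) (v::vec) k. c * v k) S"

end

theory Submission
  imports Defs
begin

text \<open>
  During round \<open>i\<close> the algorithm maintains the following invariant: the inputs span the same
  space as \<open>\<beta>\<^sub>1, \<dots>, \<beta>\<^sub>i\<close> together with the current vectors \<open>x\<^sub>j\<close> restricted to the coordinates from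
  \<open>i\<close> on (from \<open>i + 1\<close> on once \<open>x\<^sub>j\<close> has been treated in this round).
  Treating \<open>x\<^sub>j\<close> either leaves the generators alone (\<open>x\<^sub>j[i] = 0\<close>), makes the
  restriction of \<open>x\<^sub>j\<close> the new pivot \<open>\<beta>\<^sub>i\<close> while clearing its tail (\<open>av\<^sub>i = 1\<close>), or adds
  \<open>\<beta>\<^sub>i\<close> to it (\<open>av\<^sub>i = 0\<close>); a vector that was once a pivot stays zero from then on.
  After round \<open>n\<close> all restrictions are empty, so only \<open>\<beta>\<^sub>1, \<dots>, \<beta>\<^sub>n\<close> remain.
\<close>

lemma bit_cases: "(a::bit) = 0 \<or> a = 1"
  by (metis bit_not_zero_iff)

interpretation F: vector_space "\<lambda>(c::bit) (v::vec) k. c * v k"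
  by unfold_locales (auto simp: fun_eq_iff algebra_simps)

lemma f2_span_eq_span: "f2_span S = F.span S"
  by (simp add: f2_span_def)

lemma span_insert_add_insert:
  "F.span (insert (a + b) (insert b S)) = F.span (insert a (insert b S))"
  by (rule F.eq_span_insert_eq) (metis add_diff_cancel_left' F.span_base insertI1)

definition trunc_from :: "nat \<Rightarrow> nat \<Rightarrow> vec \<Rightarrow> vec" where
  "trunc_from n i v = (\<lambda>k. if i \<le> k \<and> k \<le> n then v k else 0)"

lemma trunc_from_Suc_eq:
  "v i = 0 \<Longrightarrow> trunc_from n (Suc i) v = trunc_from n i v"
  by (auto simp: trunc_from_def fun_eq_iff le_less)

lemma trunc_from_beyond: "n < i \<Longrightarrow> trunc_from n i v = 0"
  by (auto simp: trunc_from_def fun_eq_iff)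

text \<open>The first coordinate of \<open>x\<^sub>j\<close> still relevant in round \<open>i\<close> after \<open>x\<^sub>1, \<dots>, x\<^sub>t\<close> were treated.\<close>

definition round_cut :: "nat \<Rightarrow> nat \<Rightarrow> nat \<Rightarrow> nat" where
  "round_cut i t j = (if j \<le> t then Suc i else i)"

definition round_gens :: "nat \<Rightarrow> nat \<Rightarrow> tb_state \<Rightarrow> nat \<Rightarrow> nat \<Rightarrow> vec set" where
  "round_gens n m s i t = tb_beta n s ` {1..i} \<union>
     (\<lambda>j. trunc_from n (round_cut i t j) (xs s j)) ` {1..m}"

definition round_inv :: "nat \<Rightarrow> nat \<Rightarrow> tb_state \<Rightarrow> nat \<Rightarrow> nat \<Rightarrow> bool" where
  "round_inv n m s i t \<longleftrightarrow>
    (\<forall>j\<in>{1..m}. used s j = 1 \<longrightarrow> trunc_from n (round_cut i t j) (xs s j) = 0) \<and>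
    (\<forall>r\<ge>i. av s r = 1 \<longrightarrow> tb_beta n s r = 0) \<and>
    (\<forall>r>i. av s r = 1)"

lemma round_gens_eq_insert:
  assumes "1 \<le> i" and "j \<in> {1..m}"
  shows "round_gens n m s i t =
    insert (tb_beta n s i) (insert (trunc_from n (round_cut i t j) (xs s j))
      (tb_beta n s ` {1..<i} \<union> (\<lambda>j'. trunc_from n (round_cut i t j') (xs s j')) ` ({1..m} - {j})))"
proof -
  have "{1..i} = insert i {1..<i}" using assms(1) by auto
  moreover have "{1..m} = insert j ({1..m} - {j})" using assms(2) by auto
  ultimately show ?thesis
    unfolding round_gens_def by (metis (no_types, lifting) image_insert Un_insert_left Un_insert_right)
qed

lemma tb_step_other_vector:
  assumes "j' \<noteq> j"
  shows "xs (tb_step n i j s) j' = xs s j'" and "used (tb_step n i j s) j' = used s j'"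
  using assms by (simp_all add: tb_step_def Let_def)

lemma tb_step_other_round:
  assumes "r \<noteq> i"
  shows "av (tb_step n i j s) r = av s r" and "bs (tb_step n i j s) r = bs s r"
  using assms by (simp_all add: tb_step_def Let_def)

lemma tb_beta_tb_step_other_round:
  assumes "r \<noteq> i"
  shows "tb_beta n (tb_step n i j s) r = tb_beta n s r"
  unfolding tb_beta_def tb_step_other_round[OF assms] ..

lemma tb_step_pivot_tail:
  assumes used_tail: "used s j = 1 \<Longrightarrow> trunc_from n i (xs s j) = 0"
    and pivot: "av s i = 1 \<Longrightarrow> tb_beta n s i = 0" and "i \<le> n"
  defines "s' \<equiv> tb_step n i j s"
  shows "(used s' j = 1 \<longrightarrow> trunc_from n (Suc i) (xs s' j) = 0) \<and>
    (av s' i = 1 \<longrightarrow> tb_beta n s' i = 0) \<and>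
    F.span (insert (tb_beta n s' i) (insert (trunc_from n (Suc i) (xs s' j)) R)) =
    F.span (insert (tb_beta n s i) (insert (trunc_from n i (xs s j)) R))"
proof -
  define x where "x = xs s j"
  consider (skip) "x i = 0" | (new_pivot) "x i = 1" "used s j = 0" "av s i = 1"
    | (reduce) "x i = 1" "used s j = 0" "av s i = 0" | (old_pivot) "x i = 1" "used s j = 1"
    by (metis bit_cases)
  then show ?thesis
  proof cases
    case skip
    have "used s j = 1 \<Longrightarrow> x k = 0" if "i < k" "k \<le> n" for k
      using used_tail that unfolding x_def trunc_from_def fun_eq_iff by (metis zero_fun_def less_imp_le)
    then have b': "bs s' i = bs s i"
      using skip by (auto simp: s'_def tb_step_def Let_def x_def[symmetric] fun_eq_iff)
    have a': "av s' i = av s i" and "used s' j = used s j" "xs s' j = x"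
      using skip by (simp_all add: s'_def tb_step_def Let_def x_def[symmetric])
    moreover have "tb_beta n s' i = tb_beta n s i"
      unfolding tb_beta_def a' b' ..
    ultimately show ?thesis
      using used_tail pivot trunc_from_Suc_eq[of x i n, OF skip] by (simp add: x_def)
  next
    case new_pivot
    have b0: "bs s i k = 0" if "i < k" "k \<le> n" for k
      using pivot new_pivot that by (auto simp: tb_beta_def fun_eq_iff split: if_splits)
    have "used s' j = 1" "av s' i = 0"
      and b': "bs s' i = (\<lambda>k. if i < k \<and> k \<le> n then bs s i k + x k else bs s i k)"
      using new_pivot by (simp_all add: s'_def tb_step_def Let_def x_def[symmetric])
    moreover have "trunc_from n (Suc i) (xs s' j) = 0"
      using new_pivot b0
      by (auto simp: s'_def tb_step_def Let_def x_def[symmetric] trunc_from_def fun_eq_iff)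
    moreover have "tb_beta n s' i = trunc_from n i x"
      using new_pivot b0 \<open>i \<le> n\<close> \<open>av s' i = 0\<close>
      by (auto simp: tb_beta_def trunc_from_def fun_eq_iff b')
    ultimately show ?thesis
      using pivot new_pivot by (simp add: insert_commute x_def)
  next
    case reduce
    have "used s' j = 0" and a': "av s' i = av s i" and b': "bs s' i = bs s i"
      and x': "xs s' j = (\<lambda>k. if i < k \<and> k \<le> n then x k + bs s i k else x k)"
      using reduce by (simp_all add: s'_def tb_step_def Let_def x_def[symmetric])
    moreover have "tb_beta n s' i = tb_beta n s i"
      unfolding tb_beta_def a' b' ..
    moreover have "trunc_from n (Suc i) (xs s' j) = trunc_from n i x + tb_beta n s i"
      using reduce \<open>i \<le> n\<close> by (auto simp: trunc_from_def tb_beta_def fun_eq_iff x')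
    ultimately show ?thesis
      using span_insert_add_insert reduce by (simp add: insert_commute x_def)
  next
    case old_pivot
    then have "trunc_from n i x i = 0"
      using used_tail by (simp add: x_def)
    with old_pivot \<open>i \<le> n\<close> show ?thesis
      by (simp add: trunc_from_def)
  qed
qed

lemma round_inv_tb_step:
  assumes inv: "round_inv n m s i t" and "1 \<le> i" and "i \<le> n" and "t < m"
  defines "s' \<equiv> tb_step n i (Suc t) s"
  shows "round_inv n m s' i (Suc t) \<and>
    F.span (round_gens n m s' i (Suc t)) = F.span (round_gens n m s i t)"
proof -
  define rest where "rest = tb_beta n s ` {1..<i} \<union>
    (\<lambda>j'. trunc_from n (round_cut i t j') (xs s j')) ` ({1..m} - {Suc t})"
  have j: "Suc t \<in> {1..m}" using \<open>t < m\<close> by simp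
  have used_tail: "\<And>j. j \<in> {1..m} \<Longrightarrow> used s j = 1 \<Longrightarrow> trunc_from n (round_cut i t j) (xs s j) = 0"
    and later: "\<forall>r\<ge>i. av s r = 1 \<longrightarrow> tb_beta n s r = 0" "\<forall>r>i. av s r = 1"
    using inv by (auto simp: round_inv_def)
  have current: "(used s' (Suc t) = 1 \<longrightarrow> trunc_from n (Suc i) (xs s' (Suc t)) = 0) \<and>
      (av s' i = 1 \<longrightarrow> tb_beta n s' i = 0) \<and>
      F.span (insert (tb_beta n s' i) (insert (trunc_from n (Suc i) (xs s' (Suc t))) rest)) =
      F.span (insert (tb_beta n s i) (insert (trunc_from n i (xs s (Suc t))) rest))"
    unfolding s'_def using used_tail[OF j] later \<open>i \<le> n\<close>
    by (intro tb_step_pivot_tail) (simp_all add: round_cut_def)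
  have gens: "round_gens n m s i t = insert (tb_beta n s i) (insert (trunc_from n i (xs s (Suc t))) rest)"
    using round_gens_eq_insert[OF \<open>1 \<le> i\<close> j] by (simp add: rest_def round_cut_def)
  have "rest = tb_beta n s' ` {1..<i} \<union>
      (\<lambda>j. trunc_from n (round_cut i (Suc t) j) (xs s' j)) ` ({1..m} - {Suc t})"
    unfolding rest_def s'_def
    by (intro arg_cong2[where f = "(\<union>)"] image_cong)
       (auto simp: tb_beta_tb_step_other_round tb_step_other_vector round_cut_def)
  then have gens': "round_gens n m s' i (Suc t) =
      insert (tb_beta n s' i) (insert (trunc_from n (Suc i) (xs s' (Suc t))) rest)"
    using round_gens_eq_insert[OF \<open>1 \<le> i\<close> j] by (simp add: round_cut_def)
  have "F.span (round_gens n m s' i (Suc t)) = F.span (round_gens n m s i t)"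
    unfolding gens gens' using current by blast
  moreover have "round_inv n m s' i (Suc t)"
    unfolding round_inv_def
  proof (intro conjI ballI allI impI)
    fix j assume "j \<in> {1..m}" and "used s' j = 1"
    then show "trunc_from n (round_cut i (Suc t) j) (xs s' j) = 0"
      using used_tail current
      by (cases "j = Suc t") (auto simp: s'_def tb_step_other_vector round_cut_def le_Suc_eq)
  next
    fix r assume "i \<le> r" and "av s' r = 1"
    then show "tb_beta n s' r = 0"
      using later current
      by (cases "r = i") (simp_all add: s'_def tb_beta_tb_step_other_round tb_step_other_round)
  next
    fix r assume "i < r"
    then show "av s' r = 1"
      using later by (simp add: s'_def tb_step_other_round)
  qed
  ultimately show ?thesis by blast
qed

lemma round_inv_inner_loop:
  assumes "round_inv n m s i 0" and "1 \<le> i" and "i \<le> n" and "t \<le> m"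
  shows "round_inv n m (fold (tb_step n i) [1..<t+1] s) i t \<and>
    F.span (round_gens n m (fold (tb_step n i) [1..<t+1] s) i t) = F.span (round_gens n m s i 0)"
  using \<open>t \<le> m\<close>
proof (induction t)
  case 0
  then show ?case using assms(1) by simp
next
  case (Suc t)
  then show ?case
    using round_inv_tb_step[of n m "fold (tb_step n i) [1..<t+1] s" i t] assms(2,3) by simp
qed

lemma round_inv_next_round:
  assumes "round_inv n m s i m"
  shows "round_inv n m s (Suc i) 0 \<and>
    F.span (round_gens n m s (Suc i) 0) = F.span (round_gens n m s i m)"
proof -
  have cut: "j \<in> {1..m} \<Longrightarrow> round_cut (Suc i) 0 j = round_cut i m j" for j
    by (simp add: round_cut_def)
  then have "(\<lambda>j. trunc_from n (round_cut (Suc i) 0 j) (xs s j)) ` {1..m} =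
      (\<lambda>j. trunc_from n (round_cut i m j) (xs s j)) ` {1..m}"
    by (intro image_cong) simp_all
  moreover have "tb_beta n s (Suc i) = 0"
    using assms by (simp add: round_inv_def)
  ultimately have "round_gens n m s (Suc i) 0 = insert 0 (round_gens n m s i m)"
    unfolding round_gens_def by (simp add: atLeastAtMostSuc_conv)
  then have "F.span (round_gens n m s (Suc i) 0) = F.span (round_gens n m s i m)"
    by (simp only: F.span_insert_0)
  moreover have "round_inv n m s (Suc i) 0"
    using assms cut by (simp add: round_inv_def)
  ultimately show ?thesis by blast
qed

definition tb_rounds :: "nat \<Rightarrow> nat \<Rightarrow> (nat \<Rightarrow> vec) \<Rightarrow> nat \<Rightarrow> tb_state" where
  "tb_rounds n m x r = fold (\<lambda>i. fold (tb_step n i) [1..<m+1]) [1..<r+1] (tb_init x)"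

lemma tb_run_eq_tb_rounds: "tb_run n m x = tb_rounds n m x n"
  by (simp add: tb_run_def tb_rounds_def)

lemma tb_rounds_Suc: "tb_rounds n m x (Suc r) = fold (tb_step n (Suc r)) [1..<m+1] (tb_rounds n m x r)"
  by (simp add: tb_rounds_def)

lemma round_inv_tb_rounds:
  assumes support: "\<forall>j\<in>{1..m}. \<forall>k. k \<notin> {1..n} \<longrightarrow> x j k = 0" and "r \<le> n"
  shows "round_inv n m (tb_rounds n m x r) r m \<and>
    F.span (round_gens n m (tb_rounds n m x r) r m) = F.span (x ` {1..m})"
  using \<open>r \<le> n\<close>
proof (induction r)
  case 0
  have "round_gens n m (tb_init x) 0 m = x ` {1..m}"
    unfolding round_gens_def
    by (auto intro!: image_cong simp: tb_init_def round_cut_def trunc_from_def fun_eq_iff support)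
  moreover have "round_inv n m (tb_init x) 0 m"
    by (simp add: round_inv_def tb_init_def tb_beta_def fun_eq_iff)
  ultimately show ?case by (simp add: tb_rounds_def)
next
  case (Suc r)
  then show ?case
    using round_inv_next_round[of n m "tb_rounds n m x r" r]
      round_inv_inner_loop[of n m "tb_rounds n m x r" "Suc r" m]
    by (simp add: tb_rounds_Suc)
qed

theorem mainTheorem1:
  fixes n m :: nat and x :: "nat \<Rightarrow> vec"
  assumes "n \<ge> 1" and "m \<ge> 1"
    and "\<forall>j\<in>{1..m}. \<forall>k. k \<notin> {1..n} \<longrightarrow> x j k = 0"
  shows "f2_span (x ` {1..m}) = f2_span (tb_beta n (tb_run n m x) ` {1..n})"
proof -
  define s where "s = tb_run n m x"
  have "F.span (x ` {1..m}) = F.span (round_gens n m s n m)"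
    using round_inv_tb_rounds[OF assms(3) order.refl] by (simp add: s_def tb_run_eq_tb_rounds)
  also have "round_gens n m s n m = insert 0 (tb_beta n s ` {1..n})"
    using \<open>m \<ge> 1\<close> by (auto simp: round_gens_def round_cut_def trunc_from_beyond)
  also have "F.span \<dots> = F.span (tb_beta n s ` {1..n})"
    by (rule F.span_insert_0)
  finally show ?thesis
    by (simp add: f2_span_eq_span s_def)
qed

end
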